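(* Let $D$ be a tangle diagram with an admissible decorated shadow $\mathrm{SL}_2(\mathbb{C})$-coloring $i\mapsto(g_i,L_i)$, $j\mapsto u_j$. Then the associated coloring $i\mapsto\chi_i=(a_i,b_i,m_i)$ is an octahedral coloring of $D$. That is, it satisfies the following conditions at every crossing. At every crossing, $m_{1'}=m_1$ and $m_{2'}=m_2$. At every positive crossing, with $A=1-\frac{m_1b_1}{b_2}\big(1-\frac{a_1}{m_1}\big)\big(1-\frac{1}{m_2a_2}\big)$, \[ a_{1'}=a_1A^{-1},\quad a_{2'}=a_2A,\quad b_{1'}=\frac{m_2b_2}{m_1}\Big(1-m_2a_2\big(1-\tfrac{b_2}{m_1b_1}\big)\Big)^{-1},\quad b_{2'}=b_1\Big(1-\frac{m_1}{a_1}\big(1-\tfrac{b_2}{m_1b_1}\big)\Big). \] At every negative crossing, with $\tilde A=1-\frac{b_2}{m_1b_1}(1-m_1a_1)\big(1-\frac{m_2}{a_2}\big)$, \[ a_{1'}=a_1\tilde A^{-1},\quad a_{2'}=a_2\tilde A,\quad b_{1'}=\frac{m_2b_2}{m_1}\Big(1-\frac{a_2}{m_2}\big(1-\tfrac{m_1b_1}{b_2}\big)\Big),\quad b_{2'}=b_1\Big(1-\frac{1}{m_1a_1}\big(1-\tfrac{m_1b_1}{b_2}\big)\Big)^{-1}. \]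
   Context: Tangle diagrams: a tangle diagram $D$ is an oriented tangle diagram in $[0,1]^2$, viewed as a 4-valent graph with crossings. Segments are the edges of the graph; a strand is cut at every crossing, over or under. Regions are the components of the complement of the graph in the square. Above and below: for a segment $i$, $i^{\uparrow}$ is the region on the left of $i$ with respect to its orientation and $i^{\downarrow}$ the region on its right. Crossing labels: rotate a crossing so both strands point right. The incoming segments are $1$ (upper left) and $2$ (lower left). The outgoing segments are $1'$ (lower right, continuing $1$) and $2'$ (upper right, continuing $2$). The crossing is positive if strand $1\to1'$ is over, negative if strand $2\to2'$ is over. Decorated $\mathrm{SL}_2(\mathbb{C})$-coloring: assign to each segment $i$ a matrix $g_i\in\mathrm{SL}_2(\mathbb{C})$ and a line $L_i\subset\mathbb{C}^2$ of row vectors with $L_ig_i=L_i$, such that: - at positive crossings, $g_{1'}=g_1$, $g_{2'}=g_1^{-1}g_2g_1$, $L_{1'}=L_1$ and $L_{2'}=L_2g_1$; - at negative crossings, $g_{2'}=g_2$, $g_{1'}=g_2g_1g_2^{-1}$, $L_{2'}=L_2$ and $L_{1'}=L_1g_2^{-1}$. Shadow coloring: nonzero column vectors $u_j\in\mathbb{C}^2$ for regions, with $u_{i^{\downarrow}}=g_iu_{i^{\uparrow}}$ for every segment $i$. Admissibility: write $e_2=(0,1)^T$ and $\det(x,y)$ for the determinant of the matrix with columns $x,y$. For each segment choose nonzero $v_i\in L_i$ and define $m_i$ by $v_ig_i=m_i^{-1}v_i$. The coloring is admissible if $\det(u_j,e_2)\ne0$ for all regions $j$ and $v_ie_2\ne0$,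 $v_iu_{i^{\uparrow}}\neq 0$ for all segments $i$. Associated coloring: $\chi_i=\big(\det(u_{i^{\downarrow}},e_2)/\det(u_{i^{\uparrow}},e_2),\ -v_ie_2/(v_iu_{i^{\uparrow}}),\ m_i\big)$. Octahedral coloring: an assignment of a triple $(a_i,b_i,m_i)$ of nonzero complex numbers to each segment satisfying the displayed relations at each crossing. *)

theory Defs
  imports "HOL-Analysis.Analysis"
begin

text \<open>For a crossing c (rotated so both strands point right), in1 = segment 1 (upper left),
  in2 = segment 2 (lower left), out1 = segment 1' (lower right, continuing 1),
  out2 = segment 2' (upper right, continuing 2).  pos c: the crossing is positive.
  above s = the region on the left of s, below s = the region on its right.\<close>

record ('s, 'r, 'c) tangle_diagram =
  segs :: "'s set"
  regs :: "'r set"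
  crossings :: "'c set"
  pos :: "'c \<Rightarrow> bool"
  in1 :: "'c \<Rightarrow> 's"
  in2 :: "'c \<Rightarrow> 's"
  out1 :: "'c \<Rightarrow> 's"
  out2 :: "'c \<Rightarrow> 's"
  above :: "'s \<Rightarrow> 'r"
  below :: "'s \<Rightarrow> 'r"

text \<open>The four regions around a crossing are: top = 1^up = 2'^up, left = 1^down = 2^up,
  bottom = 2^down = 1'^down, right = 1'^up = 2'^down.\<close>

definition wf_diagram :: "('s, 'r, 'c, 'z) tangle_diagram_scheme \<Rightarrow> bool" where
  "wf_diagram D \<longleftrightarrow>
     finite (segs D) \<and> finite (regs D) \<and> finite (crossings D) \<and>
     (\<forall>i\<in>segs D. above D i \<in> regs D \<and> below D i \<in> regs D) \<and>
     (\<forall>c\<in>crossings D.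
        in1 D c \<in> segs D \<and> in2 D c \<in> segs D \<and> out1 D c \<in> segs D \<and> out2 D c \<in> segs D \<and>
        above D (in1 D c) = above D (out2 D c) \<and>
        below D (in1 D c) = above D (in2 D c) \<and>
        below D (in2 D c) = below D (out1 D c) \<and>
        above D (out1 D c) = below D (out2 D c))"

definition e2 :: "complex^2" where
  "e2 = (\<chi> k. if k = 2 then 1 else 0)"

definition det_cols :: "complex^2 \<Rightarrow> complex^2 \<Rightarrow> complex" where
  "det_cols x y = det (\<chi> r c. if c = 1 then x $ r else y $ r)"

definition rowcol :: "complex^2 \<Rightarrow> complex^2 \<Rightarrow> complex" where
  "rowcol v u = (\<Sum>k\<in>UNIV. v $ k * u $ k)"

definition is_line :: "(complex^2) set \<Rightarrow> bool" where
  "is_line L \<longleftrightarrow> (\<exists>w. w \<noteq> 0 \<and> L = {c *s w | c. True})"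

definition decorated_coloring ::
  "('s, 'r, 'c, 'z) tangle_diagram_scheme \<Rightarrow> ('s \<Rightarrow> complex^2^2) \<Rightarrow> ('s \<Rightarrow> (complex^2) set) \<Rightarrow> bool" where
  "decorated_coloring D g L \<longleftrightarrow>
     (\<forall>i\<in>segs D. det (g i) = 1 \<and> is_line (L i) \<and> (\<lambda>v. v v* g i) ` L i = L i) \<and>
     (\<forall>c\<in>crossings D.
        (pos D c \<longrightarrow>
           g (out1 D c) = g (in1 D c) \<and>
           g (out2 D c) = matrix_inv (g (in1 D c)) ** g (in2 D c) ** g (in1 D c) \<and>
           L (out1 D c) = L (in1 D c) \<and>
           L (out2 D c) = (\<lambda>v. v v* g (in1 D c)) ` L (in2 D c)) \<and>
        (\<not> pos D c \<longrightarrow>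
           g (out2 D c) = g (in2 D c) \<and>
           g (out1 D c) = g (in2 D c) ** g (in1 D c) ** matrix_inv (g (in2 D c)) \<and>
           L (out2 D c) = L (in2 D c) \<and>
           L (out1 D c) = (\<lambda>v. v v* matrix_inv (g (in2 D c))) ` L (in1 D c)))"

definition shadow_coloring ::
  "('s, 'r, 'c, 'z) tangle_diagram_scheme \<Rightarrow> ('s \<Rightarrow> complex^2^2) \<Rightarrow> ('r \<Rightarrow> complex^2) \<Rightarrow> bool" where
  "shadow_coloring D g u \<longleftrightarrow>
     (\<forall>j\<in>regs D. u j \<noteq> 0) \<and>
     (\<forall>i\<in>segs D. u (below D i) = g i *v u (above D i))"

definition admissible ::
  "('s, 'r, 'c, 'z) tangle_diagram_scheme \<Rightarrow> ('r \<Rightarrow> complex^2) \<Rightarrow> ('s \<Rightarrow> complex^2) \<Rightarrow> bool" where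
  "admissible D u v \<longleftrightarrow>
     (\<forall>j\<in>regs D. det_cols (u j) e2 \<noteq> 0) \<and>
     (\<forall>i\<in>segs D. rowcol (v i) e2 \<noteq> 0 \<and> rowcol (v i) (u (above D i)) \<noteq> 0)"

text \<open>Components a_i, b_i of the associated coloring (m_i is given separately).\<close>
definition assoc_a ::
  "('s, 'r, 'c, 'z) tangle_diagram_scheme \<Rightarrow> ('r \<Rightarrow> complex^2) \<Rightarrow> 's \<Rightarrow> complex" where
  "assoc_a D u i = det_cols (u (below D i)) e2 / det_cols (u (above D i)) e2"

definition assoc_b ::
  "('s, 'r, 'c, 'z) tangle_diagram_scheme \<Rightarrow> ('r \<Rightarrow> complex^2) \<Rightarrow> ('s \<Rightarrow> complex^2) \<Rightarrow> 's \<Rightarrow> complex" where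
  "assoc_b D u v i = - rowcol (v i) e2 / rowcol (v i) (u (above D i))"

definition octahedral_coloring ::
  "('s, 'r, 'c, 'z) tangle_diagram_scheme \<Rightarrow> ('s \<Rightarrow> complex) \<Rightarrow> ('s \<Rightarrow> complex) \<Rightarrow> ('s \<Rightarrow> complex) \<Rightarrow> bool" where
  "octahedral_coloring D a b m \<longleftrightarrow>
     (\<forall>i\<in>segs D. a i \<noteq> 0 \<and> b i \<noteq> 0 \<and> m i \<noteq> 0) \<and>
     (\<forall>c\<in>crossings D.
        (let a1 = a (in1 D c); a2 = a (in2 D c); a1' = a (out1 D c); a2' = a (out2 D c);
             b1 = b (in1 D c); b2 = b (in2 D c); b1' = b (out1 D c); b2' = b (out2 D c);
             m1 = m (in1 D c); m2 = m (in2 D c); m1' = m (out1 D c); m2' = m (out2 D c)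
         in m1' = m1 \<and> m2' = m2 \<and>
            (pos D c \<longrightarrow>
               (let A = 1 - (m1 * b1 / b2) * (1 - a1 / m1) * (1 - 1 / (m2 * a2)) in
                a1' = a1 * inverse A \<and> a2' = a2 * A \<and>
                b1' = (m2 * b2 / m1) * inverse (1 - m2 * a2 * (1 - b2 / (m1 * b1))) \<and>
                b2' = b1 * (1 - (m1 / a1) * (1 - b2 / (m1 * b1))))) \<and>
            (\<not> pos D c \<longrightarrow>
               (let At = 1 - (b2 / (m1 * b1)) * (1 - m1 * a1) * (1 - m2 / a2) in
                a1' = a1 * inverse At \<and> a2' = a2 * At \<and>
                b1' = (m2 * b2 / m1) * (1 - (a2 / m2) * (1 - m1 * b1 / b2)) \<and>
                b2' = b1 * inverse (1 - (1 / (m1 * a1)) * (1 - m1 * b1 / b2))))))"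

end

theory Submission
  imports Defs
begin

text \<open>Normalise the decoration of each segment by its slope t = v_1 / v_2. If g in SL_2 has the
  row eigenvector v with eigenvalue 1/m, then g sends a column x to a vector whose first coordinate
  is m x_1 + g_12 (t x_1 + x_2) and whose height t x_1 + x_2 is divided by m. The coordinate a_i is a
  ratio of first coordinates and b_i = -1 / height of the region above segment i. Around a crossing
  the four shadow vectors are therefore tied by a few such linear relations, the heights with
  respect to the two strands differing by (t_1 - t_2) x_1, and the octahedral relations become
  rational identities in these quantities. The meridians m_i are preserved because conjugation
  transports row eigenvectors: (v h) (h^-1 g h) = (v g) h.\<close>

lemma vec2_eq_iff: "(x::'a^2) = y \<longleftrightarrow> x$1 = y$1 \<and> x$2 = y$2"
  by (simp add: vec_eq_iff forall_2)

lemma matrix_vector_mult_2_nth: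
  fixes g :: "'a::comm_semiring_1^2^2"
  shows "(g *v x)$1 = g$1$1 * x$1 + g$1$2 * x$2" "(g *v x)$2 = g$2$1 * x$1 + g$2$2 * x$2"
  by (simp_all add: matrix_vector_mult_def sum_2)

lemma vector_matrix_mult_2_nth:
  fixes g :: "'a::comm_semiring_1^2^2"
  shows "(x v* g)$1 = x$1 * g$1$1 + x$2 * g$2$1" "(x v* g)$2 = x$1 * g$1$2 + x$2 * g$2$2"
  by (simp_all add: vector_matrix_mult_def sum_2)

lemma e2_nth: "e2$1 = 0" "e2$2 = 1"
  by (simp_all add: e2_def)

lemma rowcol_2: "rowcol x y = x$1 * y$1 + x$2 * y$2"
  by (simp add: rowcol_def sum_2)

lemma rowcol_e2: "rowcol x e2 = x$2"
  by (simp add: rowcol_2 e2_nth)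

lemma det_cols_e2: "det_cols x e2 = x$1"
  by (simp add: det_cols_def det_2 e2_def)

lemma rowcol_vector_matrix_mult: "rowcol (x v* g) y = rowcol x (g *v y)"
  by (simp add: rowcol_2 vector_matrix_mult_2_nth matrix_vector_mult_2_nth algebra_simps)

lemma rowcol_smult: "rowcol (k *s x) y = k * rowcol x y"
  by (simp add: rowcol_2 algebra_simps)

lemma matrix_inv_cancel:
  fixes A :: "'a::semiring_1^'n^'n"
  assumes "invertible A"
  shows "A ** matrix_inv A = mat 1" "matrix_inv A ** A = mat 1"
  using someI_ex[OF assms[unfolded invertible_def]] unfolding matrix_inv_def by auto

lemma rowcol_matrix_inv_SL2_e2:
  fixes g :: "complex^2^2"
  assumes "det g = 1"
  shows "rowcol (x v* matrix_inv g) e2 = x$2 * g$1$1 - x$1 * g$1$2"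
proof -
  define y :: "complex^2" where "y = (\<chi> k. if k = 1 then - g$1$2 else g$1$1)"
  have "g *v y = e2"
    using assms by (simp add: vec2_eq_iff matrix_vector_mult_2_nth y_def e2_nth det_2 algebra_simps)
  then have "matrix_inv g *v e2 = y"
    using matrix_inv_cancel(2) assms invertible_det_nz
    by (metis matrix_vector_mul_assoc matrix_vector_mul_lid zero_neq_one)
  then show ?thesis
    unfolding rowcol_vector_matrix_mult by (simp add: rowcol_2 y_def algebra_simps)
qed

lemma rowcol_slope:
  assumes "v$2 \<noteq> 0"
  shows "rowcol v x = v$2 * (v$1 / v$2 * x$1 + x$2)"
  using assms by (simp add: rowcol_2 field_simps)

lemma SL2_row_eigenvector:
  fixes g :: "complex^2^2"
  assumes det: "det g = 1" and eigen: "v v* g = inverse m *s v" and v2: "v$2 \<noteq> 0"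
  defines "t \<equiv> v$1 / v$2"
  shows "m \<noteq> 0" "g$1$1 = m + t * g$1$2" "g$2$2 = 1/m - t * g$1$2"
    "(g *v x)$1 = m * x$1 + g$1$2 * (t * x$1 + x$2)"
    "t * (g *v x)$1 + (g *v x)$2 = (t * x$1 + x$2) / m"
proof -
  have d: "g$1$1 * g$2$2 - g$1$2 * g$2$1 = 1"
    using det by (simp add: det_2)
  have col1: "v$1 * g$1$1 + v$2 * g$2$1 = inverse m * v$1"
   and col2: "v$1 * g$1$2 + v$2 * g$2$2 = inverse m * v$2"
    using eigen by (simp_all add: vec2_eq_iff vector_matrix_mult_2_nth)
  show m: "m \<noteq> 0"
  proof
    assume "m = 0"
    then have "v$2 * (g$1$1 * g$2$2 - g$1$2 * g$2$1) = 0"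
      using col1 col2 by algebra
    then show False using d v2 by simp
  qed
  show g22: "g$2$2 = 1/m - t * g$1$2"
    using col2 v2 m by (simp add: t_def field_simps)
  have g21: "g$2$1 = t * (1/m - g$1$1)"
    using col1 v2 m by (simp add: t_def field_simps)
  have "g$1$1 * (1/m - t * g$1$2) - g$1$2 * (t * (1/m - g$1$1)) = 1"
    using d g22 g21 by simp
  then show g11: "g$1$1 = m + t * g$1$2"
    using m by (simp add: field_simps)
  show "(g *v x)$1 = m * x$1 + g$1$2 * (t * x$1 + x$2)"
    by (simp add: matrix_vector_mult_2_nth g11 algebra_simps)
  have "rowcol v (g *v x) = inverse m * rowcol v x"
    by (simp flip: rowcol_vector_matrix_mult add: eigen rowcol_smult)
  then show "t * (g *v x)$1 + (g *v x)$2 = (t * x$1 + x$2) / m"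
    using v2 by (simp add: rowcol_slope[OF v2] t_def divide_inverse mult.commute)
qed

lemma line_elem_smult:
  assumes "is_line L" "x \<in> L" "x \<noteq> 0" "y \<in> L"
  shows "\<exists>k. y = k *s x"
proof -
  obtain w where L: "L = {c *s w | c. True}"
    using assms(1) unfolding is_line_def by blast
  obtain a b where ab: "x = a *s w" "y = b *s w"
    using assms(2,4) L by blast
  then have "y = (b / a) *s x"
    using assms(3) by (simp add: vector_smult_assoc)
  then show ?thesis by blast
qed

lemma row_eigenvalue_unique:
  fixes x :: "'a::field^'n"
  assumes "x v* g = inverse c *s x" "x v* g = inverse d *s x" "x \<noteq> 0"
  shows "c = d"
  using assms by (metis inverse_inverse_eq vector_mul_rcancel)

lemma row_eigenvector_conj:
  fixes g h h' :: "'a::field^'n^'n"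
  assumes "x v* g = c *s x" "h ** h' = mat 1"
  shows "(k *s (x v* h)) v* (h' ** g ** h) = c *s (k *s (x v* h))"
proof -
  have "(x v* h) v* (h' ** g ** h) = ((x v* (h ** h')) v* g) v* h"
    by (simp add: vector_matrix_mul_assoc matrix_mul_assoc)
  also have "\<dots> = c *s (x v* h)"
    using assms by (simp add: scalar_vector_matrix_assoc)
  finally show ?thesis
    by (simp add: scalar_vector_matrix_assoc vector_smult_assoc mult.commute)
qed

definition positive_octahedral ::
  "complex \<Rightarrow> complex \<Rightarrow> complex \<Rightarrow> complex \<Rightarrow> complex \<Rightarrow> complex \<Rightarrow> complex \<Rightarrow> complex \<Rightarrow>
   complex \<Rightarrow> complex \<Rightarrow> bool" where
  "positive_octahedral a1 a2 a1' a2' b1 b2 b1' b2' m1 m2 \<longleftrightarrow>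
     (let A = 1 - (m1 * b1 / b2) * (1 - a1 / m1) * (1 - 1 / (m2 * a2)) in
      a1' = a1 * inverse A \<and> a2' = a2 * A \<and>
      b1' = (m2 * b2 / m1) * inverse (1 - m2 * a2 * (1 - b2 / (m1 * b1))) \<and>
      b2' = b1 * (1 - (m1 / a1) * (1 - b2 / (m1 * b1))))"

definition negative_octahedral ::
  "complex \<Rightarrow> complex \<Rightarrow> complex \<Rightarrow> complex \<Rightarrow> complex \<Rightarrow> complex \<Rightarrow> complex \<Rightarrow> complex \<Rightarrow>
   complex \<Rightarrow> complex \<Rightarrow> bool" where
  "negative_octahedral a1 a2 a1' a2' b1 b2 b1' b2' m1 m2 \<longleftrightarrow>
     (let At = 1 - (b2 / (m1 * b1)) * (1 - m1 * a1) * (1 - m2 / a2) in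
      a1' = a1 * inverse At \<and> a2' = a2 * At \<and>
      b1' = (m2 * b2 / m1) * (1 - (a2 / m2) * (1 - m1 * b1 / b2)) \<and>
      b2' = b1 * inverse (1 - (1 / (m1 * a1)) * (1 - m1 * b1 / b2)))"

definition octahedral_at ::
  "('s, 'r, 'c, 'z) tangle_diagram_scheme \<Rightarrow> ('s \<Rightarrow> complex) \<Rightarrow> ('s \<Rightarrow> complex) \<Rightarrow>
   ('s \<Rightarrow> complex) \<Rightarrow> 'c \<Rightarrow> bool" where
  "octahedral_at D a b m c \<longleftrightarrow>
     m (out1 D c) = m (in1 D c) \<and> m (out2 D c) = m (in2 D c) \<and>
     (pos D c \<longrightarrow> positive_octahedral
        (a (in1 D c)) (a (in2 D c)) (a (out1 D c)) (a (out2 D c))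
        (b (in1 D c)) (b (in2 D c)) (b (out1 D c)) (b (out2 D c)) (m (in1 D c)) (m (in2 D c))) \<and>
     (\<not> pos D c \<longrightarrow> negative_octahedral
        (a (in1 D c)) (a (in2 D c)) (a (out1 D c)) (a (out2 D c))
        (b (in1 D c)) (b (in2 D c)) (b (out1 D c)) (b (out2 D c)) (m (in1 D c)) (m (in2 D c)))"

lemma octahedral_coloring_iff:
  "octahedral_coloring D a b m \<longleftrightarrow>
     (\<forall>i\<in>segs D. a i \<noteq> 0 \<and> b i \<noteq> 0 \<and> m i \<noteq> 0) \<and> (\<forall>c\<in>crossings D. octahedral_at D a b m c)"
  unfolding octahedral_coloring_def octahedral_at_def positive_octahedral_def
    negative_octahedral_def Let_def ..

text \<open>In the next two lemmas xT, xL, xB, xR are the first coordinates of the shadow vectors of the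
  top, left, bottom and right regions of a crossing, wT, wL, wR the heights of the top, left and
  right vectors with respect to the slopes of strands 1, 2 and 1, q and f the entries g_12 of the
  matrices of strands 1 and 2, and tau = t_1 - t_2 the difference of slopes; so wT - tau xT is the
  height of the top vector with respect to strand 2.\<close>

lemma positive_octahedral_identity:
  fixes m1 m2 xT xL xB xR wT wL wR q \<tau> :: complex
  assumes nz: "m1 \<noteq> 0" "m2 \<noteq> 0" "xT \<noteq> 0" "xL \<noteq> 0" "xB \<noteq> 0" "xR \<noteq> 0"
      "wT \<noteq> 0" "wL \<noteq> 0" "wR \<noteq> 0"
    and rel: "xL = m1 * xT + q * wT" "m1 * wL = wT - m1 * \<tau> * xL"
      "m2 * wR = m1 * (wL + m2 * \<tau> * xB)" "xB = m1 * xR + q * wR"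
  shows "positive_octahedral (xL / xT) (xB / xL) (xB / xR) (xR / xT)
           (-1 / wT) (-1 / wL) (-1 / wR) (- (1/m1 - \<tau> * q) / wL) m1 m2"
proof -
  have A: "1 - (m1 * (-1 / wT) / (-1 / wL)) * (1 - xL / xT / m1) * (1 - 1 / (m2 * (xB / xL)))
      = (xL / xT) * xR / xB"
    using nz by (simp add: field_simps) (use rel in algebra)
  have B: "1 - m2 * (xB / xL) * (1 - (-1 / wL) / (m1 * (-1 / wT))) = (m2 * (-1 / wL) / m1) * (- wR)"
    using nz by (simp add: field_simps) (use rel in algebra)
  have C: "- (1/m1 - \<tau> * q) / wL = (-1 / wT) * (1 - (m1 / (xL / xT)) * (1 - (-1 / wL) / (m1 * (-1 / wT))))"
    using nz by (simp add: field_simps) (use rel in algebra)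
  show ?thesis
    unfolding positive_octahedral_def Let_def A B C using nz by (simp add: field_simps)
qed

lemma negative_octahedral_identity:
  fixes m1 m2 xT xL xB xR wT wL q f \<tau> :: complex
  assumes nz: "m1 \<noteq> 0" "m2 \<noteq> 0" "xT \<noteq> 0" "xL \<noteq> 0" "xB \<noteq> 0" "xR \<noteq> 0"
      "wT \<noteq> 0" "wL \<noteq> 0" "wT - \<tau> * xT \<noteq> 0"
    and rel: "xL = m1 * xT + q * wT" "m1 * wL = wT - m1 * \<tau> * xL"
      "xB = m2 * xL + f * wL" "xR = m2 * xT + f * (wT - \<tau> * xT)"
  shows "negative_octahedral (xL / xT) (xB / xL) (xB / xR) (xR / xT)
           (-1 / wT) (-1 / wL) (- (m2 - \<tau> * f) / wT) (-1 / (wT - \<tau> * xT)) m1 m2"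
proof -
  have A: "1 - ((-1 / wL) / (m1 * (-1 / wT))) * (1 - m1 * (xL / xT)) * (1 - m2 / (xB / xL))
      = (xL / xT) * xR / xB"
    using nz by (simp add: field_simps) (use rel in algebra)
  have B: "1 - (1 / (m1 * (xL / xT))) * (1 - m1 * (-1 / wT) / (-1 / wL)) = (-1 / wT) * (- (wT - \<tau> * xT))"
    using nz by (simp add: field_simps) (use rel in algebra)
  have C: "- (m2 - \<tau> * f) / wT = (m2 * (-1 / wL) / m1) * (1 - (xB / xL / m2) * (1 - m1 * (-1 / wT) / (-1 / wL)))"
    using nz by (simp add: field_simps) (use rel in algebra)
  show ?thesis
    unfolding negative_octahedral_def Let_def A B C using nz by (simp add: field_simps)
qed

definition admissible_segment ::
  "complex^2^2 \<Rightarrow> complex^2 \<Rightarrow> complex \<Rightarrow> complex^2 \<Rightarrow> complex^2 \<Rightarrow> bool" where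
  "admissible_segment g v m x y \<longleftrightarrow>
     det g = 1 \<and> v v* g = inverse m *s v \<and> y = g *v x \<and>
     x$1 \<noteq> 0 \<and> y$1 \<noteq> 0 \<and> v$2 \<noteq> 0 \<and> rowcol v x \<noteq> 0"

lemma admissible_segment_slope:
  assumes "admissible_segment g v m x y"
  defines "t \<equiv> v$1 / v$2"
  shows "m \<noteq> 0" and "x$1 \<noteq> 0" and "y$1 \<noteq> 0" and "t * x$1 + x$2 \<noteq> 0"
    and "- v$2 / rowcol v x = -1 / (t * x$1 + x$2)"
    and "y$1 = m * x$1 + g$1$2 * (t * x$1 + x$2)"
    and "t * y$1 + y$2 = (t * x$1 + x$2) / m"
    and "g$1$1 = m + t * g$1$2" and "g$2$2 = 1/m - t * g$1$2"
proof -
  from assms have g: "det g = 1" and eigen: "v v* g = inverse m *s v" and y: "y = g *v x"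
    and nz: "x$1 \<noteq> 0" "y$1 \<noteq> 0" "v$2 \<noteq> 0" "rowcol v x \<noteq> 0"
    unfolding admissible_segment_def by auto
  note E = SL2_row_eigenvector[OF g eigen nz(3), folded t_def]
  show "m \<noteq> 0" "x$1 \<noteq> 0" "y$1 \<noteq> 0" "g$1$1 = m + t * g$1$2" "g$2$2 = 1/m - t * g$1$2"
    using E nz by auto
  show "y$1 = m * x$1 + g$1$2 * (t * x$1 + x$2)" "t * y$1 + y$2 = (t * x$1 + x$2) / m"
    using E y by auto
  show "t * x$1 + x$2 \<noteq> 0" "- v$2 / rowcol v x = -1 / (t * x$1 + x$2)"
    using nz by (simp_all add: rowcol_slope[OF nz(3)] t_def)
qed

lemma admissible_segment_meridian:
  assumes "admissible_segment g v m x y"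
    and "admissible_segment (h' ** g ** h) (k *s (v v* h)) m' x' y'" and "h ** h' = mat 1"
  shows "m' = m"
proof (rule row_eigenvalue_unique)
  show "(k *s (v v* h)) v* (h' ** g ** h) = inverse m *s (k *s (v v* h))"
    using assms(1) by (intro row_eigenvector_conj[OF _ assms(3)]) (simp add: admissible_segment_def)
  show "(k *s (v v* h)) v* (h' ** g ** h) = inverse m' *s (k *s (v v* h))"
    "k *s (v v* h) \<noteq> 0"
    using assms(2) by (auto simp: admissible_segment_def)
qed

lemma b_coordinate_smult:
  assumes "k \<noteq> 0"
  shows "- (k *s v)$2 / rowcol (k *s v) x = - v$2 / rowcol v x"
  using assms by (simp add: rowcol_smult)

lemma positive_crossing_octahedral:
  assumes S1: "admissible_segment g1 v1 m1 uT uL" and S2: "admissible_segment g2 v2 m2 uL uB"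
    and S1': "admissible_segment g1 v1' m1' uR uB"
    and S2': "admissible_segment (matrix_inv g1 ** g2 ** g1) v2' m2' uT uR"
    and v1': "v1' = k1 *s v1" and v2': "v2' = k2 *s (v2 v* g1)"
  shows "m1' = m1" and "m2' = m2"
    and "positive_octahedral (uL$1 / uT$1) (uB$1 / uL$1) (uB$1 / uR$1) (uR$1 / uT$1)
      (- v1$2 / rowcol v1 uT) (- v2$2 / rowcol v2 uL) (- v1'$2 / rowcol v1' uR)
      (- v2'$2 / rowcol v2' uT) m1 m2" (is ?octahedral)
proof -
  show m1': "m1' = m1"
    using admissible_segment_meridian[of g1 v1 m1 uT uL "mat 1" "mat 1" k1] S1 S1' v1' by simp
  have "invertible g1"
    using S1 by (simp add: admissible_segment_def invertible_det_nz)
  then show "m2' = m2"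
    using admissible_segment_meridian[OF S2 _ matrix_inv_cancel(1)] S2' v2' by simp
  have k: "k1 \<noteq> 0" "k2 \<noteq> 0"
    using S1' S2' v1' v2' by (auto simp: admissible_segment_def)
  define t1 where "t1 = v1$1 / v1$2"
  define t2 where "t2 = v2$1 / v2$2"
  have t1': "v1'$1 / v1'$2 = t1"
    using k(1) by (simp add: v1' t1_def)
  note A1 = admissible_segment_slope[OF S1, folded t1_def]
    and A2 = admissible_segment_slope[OF S2, folded t2_def]
    and A1' = admissible_segment_slope[OF S1', unfolded t1' m1']
  have "(v2 v* g1)$2 = v2$2 * (1/m1 - (t1 - t2) * g1$1$2)"
    using S2 by (simp add: admissible_segment_def vector_matrix_mult_2_nth A1(9) t2_def field_simps)
  moreover have "rowcol (v2 v* g1) uT = v2$2 * (t2 * uL$1 + uL$2)"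
    using S1 S2 by (simp add: admissible_segment_def rowcol_vector_matrix_mult rowcol_slope t2_def)
  ultimately have b2': "- v2'$2 / rowcol v2' uT = - (1/m1 - (t1 - t2) * g1$1$2) / (t2 * uL$1 + uL$2)"
    unfolding v2' b_coordinate_smult[OF k(2)] using S2 by (simp add: admissible_segment_def minus_divide_left)
  show ?octahedral
    unfolding A1(5) A2(5) A1'(5) b2'
  proof (rule positive_octahedral_identity)
    show "m1 * (t2 * uL$1 + uL$2) = t1 * uT$1 + uT$2 - m1 * (t1 - t2) * uL$1"
      using A1(1,7) by (simp add: field_simps)
    show "m2 * (t1 * uR$1 + uR$2) = m1 * (t2 * uL$1 + uL$2 + m2 * (t1 - t2) * uB$1)"
      using A1(1) A2(1,7) A1'(7) by (simp add: field_simps) algebra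
  qed (use A1 A2 A1' in auto)
qed

lemma negative_crossing_octahedral:
  assumes S1: "admissible_segment g1 v1 m1 uT uL" and S2: "admissible_segment g2 v2 m2 uL uB"
    and S1': "admissible_segment (g2 ** g1 ** matrix_inv g2) v1' m1' uR uB"
    and S2': "admissible_segment g2 v2' m2' uT uR"
    and v1': "v1' = k1 *s (v1 v* matrix_inv g2)" and v2': "v2' = k2 *s v2"
  shows "m1' = m1" and "m2' = m2"
    and "negative_octahedral (uL$1 / uT$1) (uB$1 / uL$1) (uB$1 / uR$1) (uR$1 / uT$1)
      (- v1$2 / rowcol v1 uT) (- v2$2 / rowcol v2 uL) (- v1'$2 / rowcol v1' uR)
      (- v2'$2 / rowcol v2' uT) m1 m2" (is ?octahedral)
proof -
  have "invertible g2"
    using S2 by (simp add: admissible_segment_def invertible_det_nz)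
  then have inv: "matrix_inv g2 ** g2 = mat 1"
    by (rule matrix_inv_cancel(2))
  show "m1' = m1"
    using admissible_segment_meridian[OF S1 _ inv] S1' v1' by simp
  show m2': "m2' = m2"
    using admissible_segment_meridian[of g2 v2 m2 uL uB "mat 1" "mat 1" k2] S2 S2' v2' by simp
  have k: "k1 \<noteq> 0" "k2 \<noteq> 0"
    using S1' S2' v1' v2' by (auto simp: admissible_segment_def)
  define t1 where "t1 = v1$1 / v1$2"
  define t2 where "t2 = v2$1 / v2$2"
  have t2': "v2'$1 / v2'$2 = t2"
    using k(2) by (simp add: v2' t2_def)
  note A1 = admissible_segment_slope[OF S1, folded t1_def]
    and A2 = admissible_segment_slope[OF S2, folded t2_def]
    and A2' = admissible_segment_slope[OF S2', unfolded t2' m2']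
  have slope_change: "t2 * uT$1 + uT$2 = t1 * uT$1 + uT$2 - (t1 - t2) * uT$1"
    by (simp add: algebra_simps)
  have "rowcol (v1 v* matrix_inv g2) e2 = v1$2 * (m2 - (t1 - t2) * g2$1$2)"
    using S1 S2 by (simp add: admissible_segment_def rowcol_matrix_inv_SL2_e2 A2(8) t1_def field_simps)
  moreover have "rowcol (v1 v* matrix_inv g2) uR = v1$2 * (t1 * uT$1 + uT$2)"
    using S1 S2' inv by (simp add: admissible_segment_def rowcol_vector_matrix_mult matrix_vector_mul_assoc)
      (simp add: rowcol_slope t1_def)
  ultimately have b1': "- v1'$2 / rowcol v1' uR = - (m2 - (t1 - t2) * g2$1$2) / (t1 * uT$1 + uT$2)"
    unfolding v1' b_coordinate_smult[OF k(1)] using S1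
    by (simp add: admissible_segment_def minus_divide_left flip: rowcol_e2)
  show ?octahedral
    unfolding A1(5) A2(5) b1' A2'(5) slope_change
  proof (rule negative_octahedral_identity)
    show "m1 * (t2 * uL$1 + uL$2) = t1 * uT$1 + uT$2 - m1 * (t1 - t2) * uL$1"
      using A1(1,7) by (simp add: field_simps)
    show "uR$1 = m2 * uT$1 + g2$1$2 * (t1 * uT$1 + uT$2 - (t1 - t2) * uT$1)"
      using A2'(6) slope_change by simp
  qed (use A1 A2 A2'(1-4)[unfolded slope_change] in auto)
qed

lemma assoc_a_coord: "assoc_a D u i = u (below D i) $ 1 / u (above D i) $ 1"
  by (simp add: assoc_a_def det_cols_e2)

lemma assoc_b_coord: "assoc_b D u v i = - v i $ 2 / rowcol (v i) (u (above D i))"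
  by (simp add: assoc_b_def rowcol_e2)

locale decorated_shadow_coloring =
  fixes D :: "('s, 'r, 'c, 'z) tangle_diagram_scheme"
    and g :: "'s \<Rightarrow> complex^2^2" and L :: "'s \<Rightarrow> (complex^2) set"
    and u :: "'r \<Rightarrow> complex^2" and v :: "'s \<Rightarrow> complex^2" and m :: "'s \<Rightarrow> complex"
  assumes wf: "wf_diagram D"
    and decorated: "decorated_coloring D g L"
    and shadow: "shadow_coloring D g u"
    and v_in_L: "\<forall>i\<in>segs D. v i \<in> L i \<and> v i \<noteq> 0"
    and v_eigen: "\<forall>i\<in>segs D. v i v* g i = inverse (m i) *s v i"
    and adm: "admissible D u v"
begin

lemma segment_admissible:
  assumes "i \<in> segs D"
  shows "admissible_segment (g i) (v i) (m i) (u (above D i)) (u (below D i))"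
proof -
  have "above D i \<in> regs D" "below D i \<in> regs D"
    using wf assms by (auto simp: wf_diagram_def)
  then show ?thesis
    using assms decorated shadow v_eigen adm
    unfolding decorated_coloring_def shadow_coloring_def admissible_def admissible_segment_def
    by (auto simp: det_cols_e2 rowcol_e2 simp del: tangle_diagram.select_convs)
qed

lemma decoration_smult:
  assumes "i \<in> segs D" and "w \<in> (\<lambda>x. x v* h) ` L i"
  shows "\<exists>k. w = k *s (v i v* h)"
proof -
  obtain x where x: "x \<in> L i" "w = x v* h"
    using assms(2) by blast
  have "is_line (L i)"
    using decorated assms(1) by (simp add: decorated_coloring_def)
  then obtain k where "x = k *s v i"
    using line_elem_smult v_in_L assms(1) x(1) by blast
  then show ?thesis
    using x(2) by (auto simp: scalar_vector_matrix_assoc)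
qed

lemma octahedral_at_crossing:
  assumes c: "c \<in> crossings D"
  shows "octahedral_at D (assoc_a D u) (assoc_b D u v) m c"
proof -
  define i1 where "i1 = in1 D c"
  define i2 where "i2 = in2 D c"
  define o1 where "o1 = out1 D c"
  define o2 where "o2 = out2 D c"
  have segs: "i1 \<in> segs D" "i2 \<in> segs D" "o1 \<in> segs D" "o2 \<in> segs D"
    and regions: "above D o2 = above D i1" "below D i1 = above D i2"
      "below D o1 = below D i2" "below D o2 = above D o1"
    using wf c by (auto simp: wf_diagram_def i1_def i2_def o1_def o2_def)
  note S = segment_admissible[OF segs(1)] segment_admissible[OF segs(2)]
    segment_admissible[OF segs(3)] segment_admissible[OF segs(4)]
  show ?thesis
  proof (cases "pos D c")
    case True
    \<comment> \<open>Writing the unchanged line as an image under mat 1 lets decoration_smult treat both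
      outgoing strands alike.\<close>
    then have g: "g o1 = g i1" "g o2 = matrix_inv (g i1) ** g i2 ** g i1"
      and L: "L o1 = (\<lambda>x. x v* mat 1) ` L i1" "L o2 = (\<lambda>x. x v* g i1) ` L i2"
      using decorated c by (auto simp: decorated_coloring_def i1_def i2_def o1_def o2_def)
    obtain k1 k2 where "v o1 = k1 *s (v i1 v* mat 1)" "v o2 = k2 *s (v i2 v* g i1)"
      using decoration_smult segs v_in_L L by metis
    then show ?thesis
      using positive_crossing_octahedral[of "g i1" "v i1" "m i1" _ _ "g i2" "v i2" "m i2"] S g regions True
      by (simp add: octahedral_at_def assoc_a_coord assoc_b_coord i1_def i2_def o1_def o2_def)
  next
    case False
    then have g: "g o2 = g i2" "g o1 = g i2 ** g i1 ** matrix_inv (g i2)"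
      and L: "L o2 = (\<lambda>x. x v* mat 1) ` L i2" "L o1 = (\<lambda>x. x v* matrix_inv (g i2)) ` L i1"
      using decorated c by (auto simp: decorated_coloring_def i1_def i2_def o1_def o2_def)
    obtain k1 k2 where "v o1 = k1 *s (v i1 v* matrix_inv (g i2))" "v o2 = k2 *s (v i2 v* mat 1)"
      using decoration_smult segs v_in_L L by metis
    then show ?thesis
      using negative_crossing_octahedral[of "g i1" "v i1" "m i1" _ _ "g i2" "v i2" "m i2"] S g regions False
      by (simp add: octahedral_at_def assoc_a_coord assoc_b_coord i1_def i2_def o1_def o2_def)
  qed
qed

end

theorem theorem2p11:
  fixes D :: "('s, 'r, 'c) tangle_diagram"
    and g :: "'s \<Rightarrow> complex^2^2" and L :: "'s \<Rightarrow> (complex^2) set"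
    and u :: "'r \<Rightarrow> complex^2" and v :: "'s \<Rightarrow> complex^2" and m :: "'s \<Rightarrow> complex"
  assumes "wf_diagram D"
    and "decorated_coloring D g L"
    and "shadow_coloring D g u"
    and "\<forall>i\<in>segs D. v i \<in> L i \<and> v i \<noteq> 0"
    and "\<forall>i\<in>segs D. v i v* g i = inverse (m i) *s v i"
    and "admissible D u v"
  shows "octahedral_coloring D (assoc_a D u) (assoc_b D u v) m"
proof -
  interpret decorated_shadow_coloring D g L u v m
    using assms by unfold_locales
  have "assoc_a D u i \<noteq> 0 \<and> assoc_b D u v i \<noteq> 0 \<and> m i \<noteq> 0" if "i \<in> segs D" for i
    using admissible_segment_slope[OF segment_admissible[OF that]]
    by (simp add: assoc_a_coord assoc_b_coord)
  then show ?thesis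
    unfolding octahedral_coloring_iff using octahedral_at_crossing by blast
qed

end
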